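(* Let $S=\{x_0x_2x_3=x_1^3\}\subset\mathbb P^3$ be the cubic surface with three $\boldsymbol A_2$ singularities, and consider the GIT quotient $\mathbb P(H^0(S,-K_S))^{ss}/\!\!/\mathrm{Aut}(S)$ for the natural linear action described in the context (the linearisation with $a=b=0$). Let $D\in|-K_S|\cong\mathbb P(H^0(S,-K_S))$. Then: (1) $D$ is stable if and only if $D\cap\mathrm{Sing}(S)=\emptyset$; (2) $D$ is polystable but not stable if and only if $D=H_*$, the union of the unique three lines in $S$ which contain the three $\boldsymbol A_2$ singularities; (3) $D$ is unstable if and only if $D$ is either a cuspidal plane cubic curve with $\mathrm{Sing}(D)\cap\mathrm{Sing}(S)\neq\emptyset$ or a triple line.
   Context: $H^0(S,-K_S)=H^0(S,\mathcal O_S(1))$ has basis $x_0,x_1,x_2,x_3$. $\mathrm{Aut}(S)\cong(\mathbb C^* )^2\rtimes\Sigma_3$, where $(t_0,t_2)\in(\mathbb C^* )^2$ acts by $(t_0,t_2)\cdot[x_0,x_1,x_2,x_3]=[t_0x_0,x_1,t_2x_2,t_0^{-1}t_2^{-1}x_3]$ and $\Sigma_3$ acts by permuting $x_0,x_2,x_3$. The linearisation "$a=b=0$" is this linear representation on $H^0(S,\mathcal O_S(1))$ with no twist by a character (a general twist would multiply by $t_0^{-a}t_2^{-b}$). $H_*=\{x_1=0\}|_S$. *)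

theory Defs
  imports "HOL-Analysis.Analysis" "HOL-Combinatorics.Permutations"
begin

text \<open>Vectors in C^4 = H^0(S,O_S(1)) (coefficients of linear forms
  a0 x0 + a1 x1 + a2 x2 + a3 x3) and also points of the affine cone over P^3.
  Index type 4 with indices 0,1,2,3 corresponding to x0,x1,x2,x3.\<close>

definition lf :: "complex^4 \<Rightarrow> complex^4 \<Rightarrow> complex" where
  "lf a x = (\<Sum>i\<in>UNIV. a $ i * x $ i)"

definition Fcub :: "complex^4 \<Rightarrow> complex" where
  "Fcub x = x $ 0 * x $ 2 * x $ 3 - (x $ 1) ^ 3"

definition gradF :: "complex^4 \<Rightarrow> complex^4" where
  "gradF x = (\<chi> i. if i = 0 then x $ 2 * x $ 3
                  else if i = 1 then - 3 * (x $ 1) ^ 2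
                  else if i = 2 then x $ 0 * x $ 3
                  else x $ 0 * x $ 2)"

definition singS :: "(complex^4) set" where
  "singS = {x. Fcub x = 0 \<and> gradF x = 0}"

text \<open>Affine cone over Sing(D), D = S \<inter> {l_a = 0} viewed as a plane cubic in the
  plane {l_a = 0}: points of the plane where F and the derivative of F restricted
  to the plane vanish.\<close>
definition singD :: "complex^4 \<Rightarrow> (complex^4) set" where
  "singD a = {x. lf a x = 0 \<and> Fcub x = 0 \<and>
                 (\<forall>v. lf a v = 0 \<longrightarrow> lf (gradF x) v = 0)}"

text \<open>Linear coordinates (u0:u1:u2) on the plane {l_a = 0} in P^3.\<close>
definition plane_chart :: "complex^4 \<Rightarrow> (complex^3)^4 \<Rightarrow> bool" where
  "plane_chart a M \<longleftrightarrow> inj (\<lambda>u. M *v u) \<and> range (\<lambda>u. M *v u) = {x. lf a x = 0}"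

definition cuspidal_section :: "complex^4 \<Rightarrow> bool" where
  "cuspidal_section a \<longleftrightarrow> (\<exists>M c. plane_chart a M \<and> c \<noteq> 0 \<and>
      (\<forall>u. Fcub (M *v u) = c * ((u $ 1) ^ 2 * u $ 2 - (u $ 0) ^ 3)))"

definition triple_line_section :: "complex^4 \<Rightarrow> bool" where
  "triple_line_section a \<longleftrightarrow> (\<exists>M c. plane_chart a M \<and> c \<noteq> 0 \<and>
      (\<forall>u. Fcub (M *v u) = c * (u $ 0) ^ 3))"

text \<open>Action of Aut(S) = (C^*)^2 \<rtimes> S_3 on H^0(S,O_S(1)), linearisation a=b=0:
  (t0,t2) scales x0,x1,x2,x3 by t0,1,t2,(t0 t2)^-1; sigma permutes x0,x2,x3.\<close>
definition tscale :: "complex \<Rightarrow> complex \<Rightarrow> 4 \<Rightarrow> complex" where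
  "tscale t0 t2 i = (if i = 0 then t0 else if i = 1 then 1 else if i = 2 then t2
                     else inverse (t0 * t2))"

definition AutS :: "(complex \<times> complex \<times> (4 \<Rightarrow> 4)) set" where
  "AutS = {(t0, t2, \<sigma>). t0 \<noteq> 0 \<and> t2 \<noteq> 0 \<and> \<sigma> permutes {0, 2, 3}}"

definition act :: "complex \<times> complex \<times> (4 \<Rightarrow> 4) \<Rightarrow> complex^4 \<Rightarrow> complex^4" where
  "act g v = (case g of (t0, t2, \<sigma>) \<Rightarrow> (\<chi> i. tscale t0 t2 i * v $ (inv \<sigma> i)))"

definition orbit :: "complex^4 \<Rightarrow> (complex^4) set" where
  "orbit v = (\<lambda>g. act g v) ` AutS"

definition stabilizer :: "complex^4 \<Rightarrow> (complex \<times> complex \<times> (4 \<Rightarrow> 4)) set" where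
  "stabilizer v = {g \<in> AutS. act g v = v}"

text \<open>GIT notions for the point [v] of P(H^0) (v \<noteq> 0 a lift), via the affine cone.\<close>
definition git_semistable :: "complex^4 \<Rightarrow> bool" where
  "git_semistable v \<longleftrightarrow> v \<noteq> 0 \<and> 0 \<notin> closure (orbit v)"

definition git_unstable :: "complex^4 \<Rightarrow> bool" where
  "git_unstable v \<longleftrightarrow> v \<noteq> 0 \<and> \<not> git_semistable v"

definition git_polystable :: "complex^4 \<Rightarrow> bool" where
  "git_polystable v \<longleftrightarrow> v \<noteq> 0 \<and> closed (orbit v)"

definition git_stable :: "complex^4 \<Rightarrow> bool" where
  "git_stable v \<longleftrightarrow> git_polystable v \<and> finite (stabilizer v)"

text \<open>H_* = {x1 = 0}|_S.\<close>
definition Hstar :: "complex^4" where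
  "Hstar = axis 1 1"

end

theory Submission
  imports Defs "HOL-Computational_Algebra.Polynomial"
begin

text \<open>\<open>Aut(S)\<close> acts on the coefficient vector \<open>a\<close> of \<open>D = {\<Sum> a\<^sub>i x\<^sub>i = 0}\<close> preserving
  \<open>a\<^sub>1\<close> and \<open>a\<^sub>0 a\<^sub>2 a\<^sub>3\<close>. If \<open>a\<^sub>0 a\<^sub>2 a\<^sub>3 \<noteq> 0\<close>, the orbit is the entire level set of these
  invariants, hence closed, and the stabilizer is finite. Otherwise a one-parameter subgroup
  of the torus contracts \<open>a\<close> to \<open>a\<^sub>1 e\<^sub>1\<close>, which lies in the orbit only if \<open>a = a\<^sub>1 e\<^sub>1\<close>, and
  then the stabilizer is all of \<open>Aut(S)\<close>. So \<open>D\<close> is stable iff it misses the three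
  \<open>A\<^sub>2\<close> points \<open>e\<^sub>0, e\<^sub>2, e\<^sub>3\<close>, and unstable iff \<open>a\<^sub>1 = 0 = a\<^sub>0 a\<^sub>2 a\<^sub>3\<close>.

  For \<open>a\<^sub>1 = 0\<close>, explicit coordinates on the plane show that \<open>D\<close> is a cuspidal cubic when
  exactly one of \<open>a\<^sub>0, a\<^sub>2, a\<^sub>3\<close> vanishes and a triple line when two do. The converse
  compares coefficients of the cubic along lines: the polar quadric at the cusp of a
  cuspidal section is a square on the plane, and at a point of a triple line it vanishes
  there. If \<open>a\<^sub>1 \<noteq> 0\<close>, the plane projects isomorphically onto the coordinates
  \<open>x\<^sub>0, x\<^sub>2, x\<^sub>3\<close> and neither can happen (for the cusp, as soon as the plane passes through an
  \<open>A\<^sub>2\<close> point, which puts the cusp on \<open>x\<^sub>1 = 0\<close>). If \<open>a\<^sub>1 = 0\<close> and \<open>a\<^sub>0 a\<^sub>2 a\<^sub>3 \<noteq> 0\<close>, the cubic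
  is not a cube along the line joining \<open>e\<^sub>1\<close> to a point of the plane with \<open>x\<^sub>1 = 0\<close> and
  \<open>x\<^sub>0 x\<^sub>2 x\<^sub>3 \<noteq> 0\<close>.\<close>

lemma UNIV_4_from_0: "(UNIV::4 set) = {0, 1, 2, 3}"
  using UNIV_4 by auto

lemma exhaust_4_from_0: "(i::4) = 0 \<or> i = 1 \<or> i = 2 \<or> i = 3"
  using UNIV_4_from_0 by auto

lemma vec_eq_4_iff: "(x::'a^4) = y \<longleftrightarrow> x $ 0 = y $ 0 \<and> x $ 1 = y $ 1 \<and> x $ 2 = y $ 2 \<and> x $ 3 = y $ 3"
proof
  assume "x $ 0 = y $ 0 \<and> x $ 1 = y $ 1 \<and> x $ 2 = y $ 2 \<and> x $ 3 = y $ 3"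
  then show "x = y"
    unfolding vec_eq_iff using exhaust_4_from_0 by metis
qed simp

lemma lf_4: "lf a x = a $ 0 * x $ 0 + a $ 1 * x $ 1 + a $ 2 * x $ 2 + a $ 3 * x $ 3"
  unfolding lf_def UNIV_4_from_0 by (simp add: algebra_simps)

lemma lf_axis: "lf a (axis j c) = a $ j * c"
  unfolding lf_def axis_def by (simp add: if_distrib cong: if_cong)

lemma UNIV_3_from_0: "(UNIV::3 set) = {0, 1, 2}"
  using UNIV_3 by auto

lemma vec_eq_3_iff: "(x::'a^3) = y \<longleftrightarrow> x $ 0 = y $ 0 \<and> x $ 1 = y $ 1 \<and> x $ 2 = y $ 2"
proof
  assume xy: "x $ 0 = y $ 0 \<and> x $ 1 = y $ 1 \<and> x $ 2 = y $ 2"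
  show "x = y" unfolding vec_eq_iff
  proof
    fix r :: 3
    have "r \<in> {0, 1, 2}" using UNIV_3_from_0 by blast
    then show "x $ r = y $ r" using xy by auto
  qed
qed simp

lemma matrix_vector_mult_3:
  "((M::'a::comm_semiring_1^3^'n) *v u) $ r = M $ r $ 0 * u $ 0 + M $ r $ 1 * u $ 1 + M $ r $ 2 * u $ 2"
  unfolding matrix_vector_mult_def UNIV_3_from_0 by (simp add: add.assoc)

section \<open>Orbits and stabilizers\<close>

lemma AutS_E:
  assumes "g \<in> AutS"
  obtains t0 t2 \<sigma> where "g = (t0, t2, \<sigma>)" "t0 \<noteq> 0" "t2 \<noteq> 0" "\<sigma> permutes {0, 2, 3}"
  using assms by (auto simp: AutS_def)

lemma act_nth: "act (t0, t2, \<sigma>) v $ i = tscale t0 t2 i * v $ inv \<sigma> i"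
  by (simp add: act_def)

lemma act_nth_1:
  assumes "g \<in> AutS" shows "act g v $ 1 = v $ 1"
proof -
  obtain t0 t2 \<sigma> where g: "g = (t0, t2, \<sigma>)" "\<sigma> permutes {0, 2, 3}"
    using assms by (rule AutS_E)
  have "inv \<sigma> 1 = 1"
    using permutes_inv[OF g(2)] by (rule permutes_not_in) simp
  then show ?thesis by (simp add: g act_nth tscale_def)
qed

lemma act_prod_023:
  assumes "g \<in> AutS"
  shows "act g v $ 0 * act g v $ 2 * act g v $ 3 = v $ 0 * v $ 2 * v $ 3"
proof -
  obtain t0 t2 \<sigma> where g: "g = (t0, t2, \<sigma>)" "t0 \<noteq> 0" "t2 \<noteq> 0" "\<sigma> permutes {0, 2, 3}"
    using assms by (rule AutS_E)
  have "(\<Prod>i\<in>{0,2,3::4}. v $ i) = (\<Prod>i\<in>{0,2,3::4}. v $ inv \<sigma> i)"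
    using prod.permute[OF permutes_inv[OF g(4)], of "\<lambda>i. v $ i"] by (simp add: comp_def)
  then have "v $ 0 * v $ 2 * v $ 3 = v $ inv \<sigma> 0 * v $ inv \<sigma> 2 * v $ inv \<sigma> 3"
    by (simp add: mult.assoc)
  then show ?thesis using g(2,3) by (simp add: g(1) act_nth tscale_def field_simps)
qed

lemma closed_invariant_level: "closed {y::complex^4. y $ 1 = c \<and> y $ 0 * y $ 2 * y $ 3 = d}"
  by (intro closed_Collect_conj closed_Collect_eq continuous_intros)

lemma closure_orbit_subset_invariant_level:
  "closure (orbit a) \<subseteq> {y. y $ 1 = a $ 1 \<and> y $ 0 * y $ 2 * y $ 3 = a $ 0 * a $ 2 * a $ 3}"
proof (rule closure_minimal)
  show "orbit a \<subseteq> {y. y $ 1 = a $ 1 \<and> y $ 0 * y $ 2 * y $ 3 = a $ 0 * a $ 2 * a $ 3}"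
    unfolding orbit_def using act_nth_1 act_prod_023 by auto
qed (rule closed_invariant_level)

lemma orbit_eq_invariant_level:
  assumes "a $ 0 * a $ 2 * a $ 3 \<noteq> 0"
  shows "orbit a = {y. y $ 1 = a $ 1 \<and> y $ 0 * y $ 2 * y $ 3 = a $ 0 * a $ 2 * a $ 3}"
proof
  show "orbit a \<subseteq> {y. y $ 1 = a $ 1 \<and> y $ 0 * y $ 2 * y $ 3 = a $ 0 * a $ 2 * a $ 3}"
    using closure_orbit_subset_invariant_level closure_subset by blast
  show "{y. y $ 1 = a $ 1 \<and> y $ 0 * y $ 2 * y $ 3 = a $ 0 * a $ 2 * a $ 3} \<subseteq> orbit a"
  proof safe
    fix y :: "complex^4"
    assume y: "y $ 1 = a $ 1" "y $ 0 * y $ 2 * y $ 3 = a $ 0 * a $ 2 * a $ 3"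
    have nz: "y $ 0 \<noteq> 0" "y $ 2 \<noteq> 0" "a $ 0 \<noteq> 0" "a $ 2 \<noteq> 0" "a $ 3 \<noteq> 0"
      using y(2) assms by auto
    have "(y $ 0 / a $ 0, y $ 2 / a $ 2, id) \<in> AutS"
      using nz by (simp add: AutS_def)
    moreover have "y $ 3 = a $ 0 * a $ 2 * a $ 3 / (y $ 0 * y $ 2)"
      using nz y(2) by (simp add: eq_divide_eq ac_simps)
    then have "act (y $ 0 / a $ 0, y $ 2 / a $ 2, id) a = y"
      using nz y(1) unfolding vec_eq_4_iff act_nth by (simp add: tscale_def)
    ultimately show "y \<in> orbit a" unfolding orbit_def by (metis image_eqI)
  qed
qed

lemma finite_stabilizer:
  assumes "a $ 0 * a $ 2 * a $ 3 \<noteq> 0"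
  shows "finite (stabilizer a)"
proof (rule finite_subset)
  show "stabilizer a \<subseteq> range (\<lambda>j. a $ 0 / a $ j) \<times> range (\<lambda>j. a $ 2 / a $ j) \<times> {\<sigma>. \<sigma> permutes {0, 2, 3}}"
  proof
    fix g assume "g \<in> stabilizer a"
    then have gA: "g \<in> AutS" and fix_a: "act g a = a" by (auto simp: stabilizer_def)
    obtain t0 t2 \<sigma> where g: "g = (t0, t2, \<sigma>)" "\<sigma> permutes {0, 2, 3}"
      using gA by (rule AutS_E)
    have "t0 * a $ inv \<sigma> 0 = a $ 0" "t2 * a $ inv \<sigma> 2 = a $ 2"
      using fix_a unfolding vec_eq_4_iff by (simp_all add: g act_nth tscale_def)
    then have "t0 = a $ 0 / a $ inv \<sigma> 0" "t2 = a $ 2 / a $ inv \<sigma> 2"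
      using assms by (auto simp: eq_divide_eq)
    then show "g \<in> range (\<lambda>j. a $ 0 / a $ j) \<times> range (\<lambda>j. a $ 2 / a $ j) \<times> {\<sigma>. \<sigma> permutes {0, 2, 3}}"
      using g by auto
  qed
  show "finite (range (\<lambda>j::4. a $ 0 / a $ j) \<times> range (\<lambda>j::4. a $ 2 / a $ j) \<times> {\<sigma>. \<sigma> permutes {0, 2, 3::4}})"
    by (intro finite_cartesian_product finite_imageI finite_permutations) auto
qed

lemma permutes_023_fixes_1:
  assumes "\<sigma> permutes {0, 2, 3::4}"
  shows "\<sigma> i = 1 \<longleftrightarrow> i = 1"
proof -
  have "\<sigma> 1 = 1" using assms by (rule permutes_not_in) simp
  then have "\<sigma> i = 1 \<longleftrightarrow> \<sigma> i = \<sigma> 1" by simp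
  also have "\<dots> \<longleftrightarrow> i = 1" using permutes_inj[OF assms] by (rule inj_eq)
  finally show ?thesis .
qed

lemma act_axis_1:
  assumes "g \<in> AutS" shows "act g (axis 1 c) = axis 1 c"
proof -
  obtain t0 t2 \<sigma> where g: "g = (t0, t2, \<sigma>)" "\<sigma> permutes {0, 2, 3}"
    using assms by (rule AutS_E)
  have "inv \<sigma> i = 1 \<longleftrightarrow> i = 1" for i
    using permutes_inv[OF g(2)] by (rule permutes_023_fixes_1)
  then show ?thesis by (simp add: vec_eq_iff g act_nth axis_def tscale_def)
qed

lemma act_eq_axis_1_imp:
  assumes "g \<in> AutS" "act g a = axis 1 c" shows "a = axis 1 c"
proof -
  obtain t0 t2 \<sigma> where g: "g = (t0, t2, \<sigma>)" "t0 \<noteq> 0" "t2 \<noteq> 0" "\<sigma> permutes {0, 2, 3}"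
    using assms(1) by (rule AutS_E)
  have "a $ i = 0" if "i \<noteq> 1" for i
  proof -
    have "act g a $ \<sigma> i = tscale t0 t2 (\<sigma> i) * a $ i"
      by (simp add: g(1) act_nth permutes_inverses(2)[OF g(4)])
    moreover have "act g a $ \<sigma> i = 0"
      using assms(2) permutes_023_fixes_1[OF g(4), of i] that by (simp add: axis_def)
    ultimately show ?thesis using g(2,3) by (simp add: tscale_def split: if_splits)
  qed
  moreover have "a $ 1 = c" using act_nth_1[OF assms(1), of a] assms(2) by simp
  ultimately show ?thesis by (auto simp: vec_eq_iff axis_def)
qed

lemma orbit_axis_1: "orbit (axis 1 c) = {axis 1 c}"
proof -
  have "orbit (axis 1 c) = (\<lambda>_. axis 1 c) ` AutS"
    unfolding orbit_def using act_axis_1 by (rule image_cong[OF refl])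
  moreover have "(1, 1, id) \<in> AutS" by (simp add: AutS_def)
  ultimately show ?thesis by (simp add: image_constant)
qed

lemma infinite_AutS: "infinite AutS"
proof (rule infinite_super)
  show "(\<lambda>t. (t, 1, id)) ` (UNIV - {0}) \<subseteq> AutS"
    by (auto simp: AutS_def)
  have "inj_on (\<lambda>t::complex. (t, 1::complex, id::4 \<Rightarrow> 4)) (UNIV - {0})"
    by (simp add: inj_on_def)
  then show "infinite ((\<lambda>t::complex. (t, 1::complex, id::4 \<Rightarrow> 4)) ` (UNIV - {0}))"
    by (simp add: finite_image_iff infinite_UNIV_char_0)
qed

lemma stabilizer_axis_1: "stabilizer (axis 1 c) = AutS"
  unfolding stabilizer_def using act_axis_1 by blast

text \<open>The torus weights on \<open>(x\<^sub>0, x\<^sub>2, x\<^sub>3)\<close> are a permutation of \<open>(\<epsilon>\<^sup>-\<^sup>2, \<epsilon>, \<epsilon>)\<close>, with the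
  expanding weight \<open>\<epsilon>\<^sup>-\<^sup>2\<close> placed on a vanishing coordinate of \<open>a\<close>.\<close>

lemma destabilizing_curve:
  assumes "a $ 0 * a $ 2 * a $ 3 = 0"
  obtains g where "\<And>\<epsilon>. \<epsilon> \<noteq> 0 \<Longrightarrow> g \<epsilon> \<in> AutS"
    "\<And>\<epsilon>. \<epsilon> \<noteq> 0 \<Longrightarrow> act (g \<epsilon>) a = axis 1 (a $ 1) + \<epsilon> *s (a - axis 1 (a $ 1))"
proof -
  have curve: "act (t0, t2, id) a = axis 1 (a $ 1) + \<epsilon> *s (a - axis 1 (a $ 1))"
    if "t0 * a $ 0 = \<epsilon> * a $ 0" "t2 * a $ 2 = \<epsilon> * a $ 2" "inverse (t0 * t2) * a $ 3 = \<epsilon> * a $ 3"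
    for t0 t2 \<epsilon>
    using that unfolding vec_eq_4_iff by (simp add: act_nth tscale_def axis_def)
  from assms consider "a $ 0 = 0" | "a $ 2 = 0" | "a $ 3 = 0" by auto
  then show ?thesis
  proof cases
    case 1
    show ?thesis
    proof (rule that)
      fix \<epsilon> :: complex assume "\<epsilon> \<noteq> 0"
      then show "(inverse (\<epsilon>\<^sup>2), \<epsilon>, id) \<in> AutS" by (simp add: AutS_def)
      show "act (inverse (\<epsilon>\<^sup>2), \<epsilon>, id) a = axis 1 (a $ 1) + \<epsilon> *s (a - axis 1 (a $ 1))"
        using \<open>\<epsilon> \<noteq> 0\<close> by (intro curve) (simp_all add: 1 power2_eq_square)
    qed
  next
    case 2
    show ?thesis
    proof (rule that)
      fix \<epsilon> :: complex assume "\<epsilon> \<noteq> 0"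
      then show "(\<epsilon>, inverse (\<epsilon>\<^sup>2), id) \<in> AutS" by (simp add: AutS_def)
      show "act (\<epsilon>, inverse (\<epsilon>\<^sup>2), id) a = axis 1 (a $ 1) + \<epsilon> *s (a - axis 1 (a $ 1))"
        using \<open>\<epsilon> \<noteq> 0\<close> by (intro curve) (simp_all add: 2 power2_eq_square)
    qed
  next
    case 3
    show ?thesis
    proof (rule that)
      fix \<epsilon> :: complex assume "\<epsilon> \<noteq> 0"
      then show "(\<epsilon>, \<epsilon>, id) \<in> AutS" by (simp add: AutS_def)
      show "act (\<epsilon>, \<epsilon>, id) a = axis 1 (a $ 1) + \<epsilon> *s (a - axis 1 (a $ 1))"
        by (intro curve) (simp_all add: 3)
    qed
  qed
qed

lemma axis_1_in_closure_orbit: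
  assumes "a $ 0 * a $ 2 * a $ 3 = 0"
  shows "axis 1 (a $ 1) \<in> closure (orbit a)"
proof -
  obtain g where g: "\<And>\<epsilon>. \<epsilon> \<noteq> 0 \<Longrightarrow> g \<epsilon> \<in> AutS"
    "\<And>\<epsilon>. \<epsilon> \<noteq> 0 \<Longrightarrow> act (g \<epsilon>) a = axis 1 (a $ 1) + \<epsilon> *s (a - axis 1 (a $ 1))"
    using destabilizing_curve[OF assms] by blast
  have lim: "((\<lambda>\<epsilon>. c + \<epsilon> *s b) \<longlongrightarrow> c) (at 0)" for b c :: "complex^4"
  proof (rule vec_tendstoI)
    fix i
    have "((\<lambda>\<epsilon>. c $ i + \<epsilon> * b $ i) \<longlongrightarrow> c $ i + 0 * b $ i) (at 0)"
      by (intro tendsto_intros)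
    then show "((\<lambda>\<epsilon>. (c + \<epsilon> *s b) $ i) \<longlongrightarrow> c $ i) (at 0)"
      by simp
  qed
  have "eventually (\<lambda>\<epsilon>. \<epsilon> \<noteq> 0) (at (0::complex))"
    by (simp add: eventually_at_filter)
  then have ev: "eventually (\<lambda>\<epsilon>. axis 1 (a $ 1) + \<epsilon> *s (a - axis 1 (a $ 1)) \<in> closure (orbit a)) (at 0)"
  proof (rule eventually_mono)
    fix \<epsilon> :: complex assume "\<epsilon> \<noteq> 0"
    then have "act (g \<epsilon>) a \<in> orbit a" unfolding orbit_def using g(1) by (rule_tac imageI)
    then show "axis 1 (a $ 1) + \<epsilon> *s (a - axis 1 (a $ 1)) \<in> closure (orbit a)"
      using g(2)[OF \<open>\<epsilon> \<noteq> 0\<close>] closure_subset by auto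
  qed
  show ?thesis
    using Lim_in_closed_set[OF closed_closure ev at_neq_bot lim] .
qed

lemma closed_orbit_iff:
  assumes "a $ 0 * a $ 2 * a $ 3 = 0"
  shows "closed (orbit a) \<longleftrightarrow> a = axis 1 (a $ 1)"
proof
  assume "closed (orbit a)"
  then have "axis 1 (a $ 1) \<in> orbit a"
    using axis_1_in_closure_orbit[OF assms] by (simp add: closure_closed)
  then obtain g where "g \<in> AutS" "act g a = axis 1 (a $ 1)"
    unfolding orbit_def by (metis imageE)
  then show "a = axis 1 (a $ 1)" by (rule act_eq_axis_1_imp)
next
  assume "a = axis 1 (a $ 1)"
  then show "closed (orbit a)" by (metis orbit_axis_1 closed_singleton)
qed

lemma git_stable_iff:
  assumes "a \<noteq> 0"
  shows "git_stable a \<longleftrightarrow> a $ 0 * a $ 2 * a $ 3 \<noteq> 0"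
proof
  assume stable: "git_stable a"
  show "a $ 0 * a $ 2 * a $ 3 \<noteq> 0"
  proof
    assume "a $ 0 * a $ 2 * a $ 3 = 0"
    then have "a = axis 1 (a $ 1)"
      using stable closed_orbit_iff by (simp add: git_stable_def git_polystable_def)
    then show False
      using stable infinite_AutS stabilizer_axis_1 by (metis git_stable_def)
  qed
next
  assume "a $ 0 * a $ 2 * a $ 3 \<noteq> 0"
  then show "git_stable a"
    using assms orbit_eq_invariant_level closed_invariant_level finite_stabilizer
    by (simp add: git_stable_def git_polystable_def)
qed

lemma git_polystable_not_stable_iff:
  assumes "a \<noteq> 0"
  shows "git_polystable a \<and> \<not> git_stable a \<longleftrightarrow> a = axis 1 (a $ 1)"
proof -
  have "a $ 0 * a $ 2 * a $ 3 = 0" if "a = axis 1 (a $ 1)"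
    by (subst that) (simp add: axis_def)
  then show ?thesis
    using assms git_stable_iff closed_orbit_iff by (auto simp: git_polystable_def)
qed

lemma git_unstable_iff:
  assumes "a \<noteq> 0"
  shows "git_unstable a \<longleftrightarrow> a $ 1 = 0 \<and> a $ 0 * a $ 2 * a $ 3 = 0"
proof -
  have "0 \<in> closure (orbit a) \<longleftrightarrow> a $ 1 = 0 \<and> a $ 0 * a $ 2 * a $ 3 = 0"
  proof
    assume "0 \<in> closure (orbit a)"
    then show "a $ 1 = 0 \<and> a $ 0 * a $ 2 * a $ 3 = 0"
      using closure_orbit_subset_invariant_level[of a] by auto
  next
    assume "a $ 1 = 0 \<and> a $ 0 * a $ 2 * a $ 3 = 0"
    moreover have "axis 1 0 = (0::complex^4)" by (simp add: axis_def vec_eq_iff)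
    ultimately show "0 \<in> closure (orbit a)"
      using axis_1_in_closure_orbit[of a] by metis
  qed
  then show ?thesis using assms by (simp add: git_unstable_def git_semistable_def)
qed

section \<open>Plane sections of \<open>S\<close>\<close>

lemma singS_iff_axis: "x \<in> singS \<longleftrightarrow> (\<exists>j\<in>{0, 2, 3}. x = axis j (x $ j))"
proof
  assume "x \<in> singS"
  then have x: "x $ 1 = 0" "x $ 2 * x $ 3 = 0" "x $ 0 * x $ 3 = 0" "x $ 0 * x $ 2 = 0"
    unfolding singS_def vec_eq_4_iff by (simp_all add: gradF_def)
  consider "x $ 0 \<noteq> 0" | "x $ 2 \<noteq> 0" | "x $ 0 = 0" "x $ 2 = 0" by blast
  then show "\<exists>j\<in>{0, 2, 3}. x = axis j (x $ j)"
  proof cases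
    case 1
    then have "x = axis 0 (x $ 0)" using x by (simp add: vec_eq_4_iff axis_def)
    then show ?thesis by blast
  next
    case 2
    then have "x = axis 2 (x $ 2)" using x by (simp add: vec_eq_4_iff axis_def)
    then show ?thesis by blast
  next
    case 3
    then have "x = axis 3 (x $ 3)" using x by (simp add: vec_eq_4_iff axis_def)
    then show ?thesis by blast
  qed
next
  assume "\<exists>j\<in>{0, 2, 3}. x = axis j (x $ j)"
  then show "x \<in> singS"
    by (auto simp: singS_def Fcub_def gradF_def vec_eq_4_iff axis_def)
qed

lemma plane_avoids_singS_iff:
  "(\<forall>x. x \<noteq> 0 \<and> x \<in> singS \<longrightarrow> lf a x \<noteq> 0) \<longleftrightarrow> a $ 0 * a $ 2 * a $ 3 \<noteq> 0"
proof
  assume avoid: "\<forall>x. x \<noteq> 0 \<and> x \<in> singS \<longrightarrow> lf a x \<noteq> 0"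
  have "a $ j \<noteq> 0" if "j \<in> {0, 2, 3}" for j
    using avoid[rule_format, of "axis j 1"] that
    by (auto simp: singS_iff_axis lf_axis axis_eq_0_iff)
  then show "a $ 0 * a $ 2 * a $ 3 \<noteq> 0" by simp
next
  assume a: "a $ 0 * a $ 2 * a $ 3 \<noteq> 0"
  show "\<forall>x. x \<noteq> 0 \<and> x \<in> singS \<longrightarrow> lf a x \<noteq> 0"
  proof safe
    fix x assume "x \<noteq> 0" "x \<in> singS" "lf a x = 0"
    then obtain j where j: "j \<in> {0, 2, 3}" "x = axis j (x $ j)"
      by (auto simp: singS_iff_axis)
    then have "x $ j \<noteq> 0" using \<open>x \<noteq> 0\<close> by (metis axis_eq_0_iff)
    moreover have "a $ j \<noteq> 0" using a j(1) by auto
    moreover have "lf a x = a $ j * x $ j" by (subst j(2)) (rule lf_axis)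
    ultimately show False using \<open>lf a x = 0\<close> by simp
  qed
qed

lemma axis_in_singD:
  assumes "j \<in> {0, 2, 3}" "a $ j = 0"
  shows "axis j 1 \<in> singD a"
proof -
  have "axis j 1 \<in> singS" using assms(1) by (auto simp: singS_iff_axis)
  moreover have "lf 0 v = 0" for v by (simp add: lf_def)
  ultimately show ?thesis
    using assms(2) by (simp add: singS_def singD_def lf_axis)
qed

lemma plane_chart_intro:
  assumes "\<And>u. N (M *v u) = u" "\<And>x. lf a x = 0 \<Longrightarrow> M *v N x = x" "\<And>u. lf a (M *v u) = 0"
  shows "plane_chart a M"
  unfolding plane_chart_def
proof
  show "inj ((*v) M)" by (metis assms(1) injI)
  show "range ((*v) M) = {x. lf a x = 0}"
    using assms(2,3) by (auto intro: range_eqI[where x = "N _", OF sym])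
qed

lemma plane_chart_in_plane: "plane_chart a M \<Longrightarrow> lf a (M *v u) = 0"
  unfolding plane_chart_def by blast

lemma plane_chart_surj: "plane_chart a M \<Longrightarrow> lf a x = 0 \<Longrightarrow> \<exists>u. x = M *v u"
  unfolding plane_chart_def by blast

lemma plane_chart_nonzero: "plane_chart a M \<Longrightarrow> u \<noteq> 0 \<Longrightarrow> M *v u \<noteq> 0"
  unfolding plane_chart_def by (metis injD matrix_vector_mult_0_right)

context
  fixes i j k :: 4
  assumes ijk: "{i, j, k} = {0, 2, 3}" "distinct [i, j, k]"
begin

lemma ijk_neq_1: "i \<noteq> 1" "j \<noteq> 1" "k \<noteq> 1"
proof -
  have "1 \<notin> {i, j, k}" using ijk(1) by auto
  then show "i \<noteq> 1" "j \<noteq> 1" "k \<noteq> 1" by auto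
qed

lemma UNIV_eq_1_ijk: "UNIV = {1, i, j, k}"
  using ijk(1) UNIV_4_from_0 by auto

lemma vec_eq_ijk_iff: "(x::'a^4) = y \<longleftrightarrow> x $ 1 = y $ 1 \<and> x $ i = y $ i \<and> x $ j = y $ j \<and> x $ k = y $ k"
proof
  assume xy: "x $ 1 = y $ 1 \<and> x $ i = y $ i \<and> x $ j = y $ j \<and> x $ k = y $ k"
  show "x = y" unfolding vec_eq_iff
  proof
    fix r :: 4
    have "r \<in> {1, i, j, k}" using UNIV_eq_1_ijk by blast
    then show "x $ r = y $ r" using xy by auto
  qed
qed simp

lemma lf_ijk: "lf a x = a $ 1 * x $ 1 + a $ i * x $ i + a $ j * x $ j + a $ k * x $ k"
  using ijk(2) ijk_neq_1 unfolding lf_def UNIV_eq_1_ijk by (simp add: add.assoc)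

lemma Fcub_ijk: "Fcub x = x $ i * x $ j * x $ k - (x $ 1) ^ 3"
proof -
  have "x $ 0 * x $ 2 * x $ 3 = (\<Prod>r\<in>{0, 2, 3}. x $ r)" by (simp add: mult.assoc)
  also have "\<dots> = x $ i * x $ j * x $ k"
    using ijk by (simp flip: ijk(1) add: mult.assoc)
  finally show ?thesis by (simp add: Fcub_def)
qed

text \<open>Coordinates \<open>(x\<^sub>1 : x\<^sub>j : x\<^sub>i / s)\<close> on a plane \<open>a\<^sub>i x\<^sub>i + a\<^sub>j x\<^sub>j + a\<^sub>k x\<^sub>k = 0\<close>
  through the point \<open>[e\<^sub>1]\<close>; the coordinate \<open>x\<^sub>k\<close> is solved from the equation.\<close>

definition graph_chart :: "complex^4 \<Rightarrow> complex \<Rightarrow> complex^3^4" where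
  "graph_chart a s = (\<chi> r c.
     if r = 1 then (if c = 0 then 1 else 0)
     else if r = j then (if c = 1 then 1 else 0)
     else if r = i then (if c = 2 then s else 0)
     else if c = 1 then - a $ j / a $ k else if c = 2 then - a $ i * s / a $ k else 0)"

lemma graph_chart_apply:
  "(graph_chart a s *v u) $ 1 = u $ 0"
  "(graph_chart a s *v u) $ j = u $ 1"
  "(graph_chart a s *v u) $ i = s * u $ 2"
  "(graph_chart a s *v u) $ k = - (a $ j * u $ 1 + a $ i * s * u $ 2) / a $ k"
  using ijk(2) ijk_neq_1 by (auto simp: graph_chart_def matrix_vector_mult_3 diff_divide_distrib)

lemma plane_chart_graph_chart:
  assumes "a $ 1 = 0" "a $ k \<noteq> 0" "s \<noteq> 0"
  shows "plane_chart a (graph_chart a s)"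
proof (rule plane_chart_intro)
  let ?N = "\<lambda>x. \<chi> c. if c = 0 then x $ 1 else if c = 1 then x $ j else x $ i / s"
  show "?N (graph_chart a s *v u) = u" for u
    using assms(3) by (simp add: vec_eq_3_iff graph_chart_apply)
  show "graph_chart a s *v ?N x = x" if "lf a x = 0" for x
  proof -
    have "a $ k * x $ k = - (a $ j * x $ j + a $ i * x $ i)"
      using that assms(1) unfolding lf_ijk by (simp add: eq_neg_iff_add_eq_0 algebra_simps)
    then have "x $ k = - (a $ j * x $ j + a $ i * x $ i) / a $ k"
      using assms(2) by (simp add: eq_divide_eq mult.commute)
    then show ?thesis using assms(3) by (simp add: vec_eq_ijk_iff graph_chart_apply mult.commute)
  qed
  show "lf a (graph_chart a s *v u) = 0" for u
    using assms by (simp add: lf_ijk graph_chart_apply field_simps)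
qed

lemma cuspidal_section_if:
  assumes "a $ 1 = 0" "a $ i = 0" "a $ j \<noteq> 0" "a $ k \<noteq> 0"
  shows "cuspidal_section a"
proof -
  let ?M = "graph_chart a (- a $ k / a $ j)"
  have "plane_chart a ?M" using assms by (simp add: plane_chart_graph_chart)
  moreover have "Fcub (?M *v u) = 1 * ((u $ 1) ^ 2 * u $ 2 - (u $ 0) ^ 3)" for u
    using assms by (simp add: Fcub_ijk graph_chart_apply field_simps power2_eq_square)
  ultimately show ?thesis unfolding cuspidal_section_def by (intro exI[of _ ?M] exI[of _ 1]) simp
qed

lemma triple_line_section_if:
  assumes "a $ 1 = 0" "a $ i = 0" "a $ j = 0" "a $ k \<noteq> 0"
  shows "triple_line_section a"
proof -
  let ?M = "graph_chart a 1"
  have "plane_chart a ?M" using assms by (simp add: plane_chart_graph_chart)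
  moreover have "Fcub (?M *v u) = - 1 * (u $ 0) ^ 3" for u
    using assms by (simp add: Fcub_ijk graph_chart_apply)
  ultimately show ?thesis unfolding triple_line_section_def by (intro exI[of _ ?M] exI[of _ "- 1"]) simp
qed

end

lemma unstable_section_cases:
  assumes "a \<noteq> 0" "a $ 1 = 0" "a $ 0 * a $ 2 * a $ 3 = 0"
  shows "cuspidal_section a \<or> triple_line_section a"
proof -
  have "a $ 0 \<noteq> 0 \<or> a $ 2 \<noteq> 0 \<or> a $ 3 \<noteq> 0" using assms(1,2) by (auto simp: vec_eq_4_iff)
  then consider "a $ 0 = 0" "a $ 2 = 0" "a $ 3 \<noteq> 0" | "a $ 0 = 0" "a $ 3 = 0" "a $ 2 \<noteq> 0"
    | "a $ 2 = 0" "a $ 3 = 0" "a $ 0 \<noteq> 0" | "a $ 0 = 0" "a $ 2 \<noteq> 0" "a $ 3 \<noteq> 0"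
    | "a $ 2 = 0" "a $ 3 \<noteq> 0" "a $ 0 \<noteq> 0" | "a $ 3 = 0" "a $ 0 \<noteq> 0" "a $ 2 \<noteq> 0"
    using assms(3) by auto
  then show ?thesis
  proof cases
    case 1
    then show ?thesis using triple_line_section_if[of 0 2 3 a] assms(2)
      by (simp add: insert_commute)
  next
    case 2
    then show ?thesis using triple_line_section_if[of 0 3 2 a] assms(2)
      by (simp add: insert_commute)
  next
    case 3
    then show ?thesis using triple_line_section_if[of 2 3 0 a] assms(2)
      by (simp add: insert_commute)
  next
    case 4
    then show ?thesis using cuspidal_section_if[of 0 2 3 a] assms(2)
      by (simp add: insert_commute)
  next
    case 5
    then show ?thesis using cuspidal_section_if[of 2 3 0 a] assms(2)
      by (simp add: insert_commute)
  next
    case 6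
    then show ?thesis using cuspidal_section_if[of 3 0 2 a] assms(2)
      by (simp add: insert_commute)
  qed
qed

lemma Fcub_add_smult:
  "Fcub (x + s *s p) = Fcub x + s * lf (gradF x) p + s\<^sup>2 * lf (gradF p) x + s ^ 3 * Fcub p"
  by (simp add: Fcub_def gradF_def lf_4 algebra_simps power2_eq_square power3_eq_cube)

lemma cubic_all_0_imp_coeffs_0:
  fixes c0 c1 c2 c3 :: "'a::{idom,ring_char_0}"
  assumes "\<And>s. c0 + c1 * s + c2 * s\<^sup>2 + c3 * s ^ 3 = 0"
  shows "c0 = 0 \<and> c1 = 0 \<and> c2 = 0 \<and> c3 = 0"
proof -
  have "\<forall>s. poly [:c0, c1, c2, c3:] s = 0"
    using assms by (simp add: algebra_simps power2_eq_square power3_eq_cube)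
  then have "[:c0, c1, c2, c3:] = 0" by (simp only: poly_all_0_iff_0)
  then show ?thesis by simp
qed

lemma Fcub_affine_along:
  assumes "\<And>s. Fcub (x + s *s p) = Fcub x + s * q"
  shows "lf (gradF x) p = q" "lf (gradF p) x = 0" "Fcub p = 0"
proof -
  have "0 + (lf (gradF x) p - q) * s + lf (gradF p) x * s\<^sup>2 + Fcub p * s ^ 3 = 0" for s
    using assms[of s] by (simp add: Fcub_add_smult algebra_simps)
  from cubic_all_0_imp_coeffs_0[OF this]
  show "lf (gradF x) p = q" "lf (gradF p) x = 0" "Fcub p = 0" by simp_all
qed

lemma cuspidal_chart_cusp:
  assumes chart: "plane_chart a M"
    and F: "\<And>u. Fcub (M *v u) = c * ((u $ 1) ^ 2 * u $ 2 - (u $ 0) ^ 3)"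
  shows "M *v axis 2 1 \<in> singD a"
    and "lf (gradF (M *v u)) (M *v axis 2 1) = c * (u $ 1)\<^sup>2"
proof -
  let ?p = "M *v axis 2 1"
  have along: "Fcub (M *v u + s *s ?p) = Fcub (M *v u) + s * (c * (u $ 1)\<^sup>2)" for u s
  proof -
    have "M *v u + s *s ?p = M *v (u + s *s axis 2 1)"
      by (simp add: matrix_vector_right_distrib vector_scalar_commute)
    then have "Fcub (M *v u + s *s ?p) = c * ((u $ 1)\<^sup>2 * (u $ 2 + s) - (u $ 0) ^ 3)"
      by (simp add: F axis_def)
    then show ?thesis by (simp add: F algebra_simps)
  qed
  note polars = Fcub_affine_along[OF along]
  show "lf (gradF (M *v u)) ?p = c * (u $ 1)\<^sup>2" by (rule polars(1))
  have "lf (gradF ?p) v = 0" if "lf a v = 0" for v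
    using plane_chart_surj[OF chart that] polars(2) by blast
  then show "?p \<in> singD a"
    using plane_chart_in_plane[OF chart] polars(3) by (simp add: singD_def)
qed

text \<open>For \<open>p\<^sub>1 = 0\<close> the polar quadric is \<open>p\<^sub>0 x\<^sub>2 x\<^sub>3 + p\<^sub>2 x\<^sub>0 x\<^sub>3 + p\<^sub>3 x\<^sub>0 x\<^sub>2\<close>. Being \<open>c\<close> times a
  square on the plane, it vanishes together with that square's linear form at the points
  \<open>z\<^sub>j\<close> of the plane over \<open>e\<^sub>0, e\<^sub>2, e\<^sub>3\<close>, hence also at their pairwise sums, where it takes
  the values \<open>p\<^sub>0, p\<^sub>2, p\<^sub>3\<close>.\<close>

lemma polar_square_on_plane_imp_zero:
  assumes chart: "plane_chart a M" and "a $ 1 \<noteq> 0" "p $ 1 = 0"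
    and polar: "\<And>u. lf (gradF (M *v u)) p = c * (u $ 1)\<^sup>2"
  shows "p = 0"
proof -
  have polar_eq: "lf (gradF x) p = p $ 0 * x $ 2 * x $ 3 + p $ 2 * x $ 0 * x $ 3 + p $ 3 * x $ 0 * x $ 2" for x
    using \<open>p $ 1 = 0\<close> by (simp add: lf_4 gradF_def algebra_simps)
  define z where "z j = axis j 1 - (a $ j / a $ 1) *s axis 1 1" for j :: 4
  have "lf a (z j) = lf a (axis j 1) - a $ j / a $ 1 * lf a (axis 1 1)" for j
    by (simp add: z_def lf_def algebra_simps sum_subtractf sum_distrib_left)
  then have "lf a (z j) = 0" for j
    using \<open>a $ 1 \<noteq> 0\<close> by (simp add: lf_axis)
  then have "\<forall>j. \<exists>v. z j = M *v v"
    using plane_chart_surj[OF chart] by blast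
  then obtain u where u: "\<And>j. z j = M *v u j"
    by (metis choice)
  have vanish: "c * (u j $ 1)\<^sup>2 = 0" if "j \<in> {0, 2, 3}" for j
  proof -
    have "lf (gradF (z j)) p = 0" using that by (auto simp: polar_eq z_def axis_def)
    then show ?thesis using polar[of "u j"] u[of j] by simp
  qed
  have "lf (gradF (z i + z j)) p = 0" if "i \<in> {0, 2, 3}" "j \<in> {0, 2, 3}" for i j
  proof -
    have "c * y = 0" if "c * y\<^sup>2 = 0" for y
    proof -
      have "(c * y)\<^sup>2 = c * (c * y\<^sup>2)" by (simp add: power2_eq_square)
      then show ?thesis using that by simp
    qed
    then have "c * u i $ 1 = 0" "c * u j $ 1 = 0"
      using vanish[OF that(1)] vanish[OF that(2)] by blast+
    have "z i + z j = M *v (u i + u j)" by (simp add: u matrix_vector_right_distrib)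
    then have "lf (gradF (z i + z j)) p = c * ((u i + u j) $ 1)\<^sup>2" by (simp only: polar)
    also have "\<dots> = (c * u i $ 1) * (u i $ 1 + u j $ 1) + (c * u j $ 1) * (u i $ 1 + u j $ 1)"
      by (simp add: power2_eq_square algebra_simps)
    also have "\<dots> = 0"
      by (simp only: \<open>c * u i $ 1 = 0\<close> \<open>c * u j $ 1 = 0\<close> mult_zero_left add_0)
    finally show ?thesis .
  qed
  from this[of 2 3] this[of 0 3] this[of 0 2] have "p $ 0 = 0" "p $ 2 = 0" "p $ 3 = 0"
    by (simp_all add: polar_eq z_def axis_def)
  with \<open>p $ 1 = 0\<close> show "p = 0" by (simp add: vec_eq_4_iff)
qed

lemma cuspidal_section_coeff_prod_nonzero:
  assumes "cuspidal_section a" "a $ 1 \<noteq> 0"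
  shows "a $ 0 * a $ 2 * a $ 3 \<noteq> 0"
proof
  assume "a $ 0 * a $ 2 * a $ 3 = 0"
  then obtain j where j: "j \<in> {0, 2, 3}" "a $ j = 0" by auto
  obtain M c where chart: "plane_chart a M"
    and F: "\<And>u. Fcub (M *v u) = c * ((u $ 1) ^ 2 * u $ 2 - (u $ 0) ^ 3)"
    using assms(1) unfolding cuspidal_section_def by blast
  define p where "p = M *v axis 2 1"
  have sing: "p \<in> singD a" and polar: "\<And>u. lf (gradF (M *v u)) p = c * (u $ 1)\<^sup>2"
    unfolding p_def using cuspidal_chart_cusp[OF chart F] by blast+
  have "lf a (axis j 1) = 0" using j(2) by (simp add: lf_axis)
  then have "lf (gradF p) (axis j 1) = 0" using sing by (simp add: singD_def)
  then have "gradF p $ j = 0" by (simp add: lf_axis)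
  have "(p $ 1) ^ 3 = p $ 0 * p $ 2 * p $ 3"
    using sing by (simp add: singD_def Fcub_def)
  also have "\<dots> = p $ j * gradF p $ j"
    using j(1) by (auto simp: gradF_def)
  also have "\<dots> = 0" using \<open>gradF p $ j = 0\<close> by simp
  finally have "p $ 1 = 0" by simp
  then have "p = 0" using polar_square_on_plane_imp_zero[OF chart assms(2) _ polar] by blast
  moreover have "p \<noteq> 0"
    unfolding p_def using chart by (rule plane_chart_nonzero) (simp add: axis_eq_0_iff)
  ultimately show False by blast
qed

lemma triple_line_section_coeff_1_eq_0:
  assumes "triple_line_section a" shows "a $ 1 = 0"
proof (rule ccontr)
  assume "a $ 1 \<noteq> 0"
  obtain M c where chart: "plane_chart a M"
    and F: "\<And>u. Fcub (M *v u) = c * (u $ 0) ^ 3"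
    using assms unfolding triple_line_section_def by blast
  define v :: "complex^3" where "v = (if M $ 1 $ 1 = 0 \<and> M $ 1 $ 2 = 0 then axis 1 1
                       else M $ 1 $ 2 *s axis 1 1 - M $ 1 $ 1 *s axis 2 1)"
  have "v $ 0 = 0" "v \<noteq> 0" "(M *v v) $ 1 = 0"
    by (auto simp: v_def axis_def vec_eq_3_iff matrix_vector_mult_3)
  have "Fcub (M *v u + s *s (M *v v)) = Fcub (M *v u) + s * 0" for u s
  proof -
    have "M *v u + s *s (M *v v) = M *v (u + s *s v)"
      by (simp add: matrix_vector_right_distrib vector_scalar_commute)
    then show ?thesis using \<open>v $ 0 = 0\<close> by (simp add: F)
  qed
  then have "lf (gradF (M *v u)) (M *v v) = 0 * (u $ 1)\<^sup>2" for u
    using Fcub_affine_along(1) by simp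
  then have "M *v v = 0"
    using polar_square_on_plane_imp_zero[OF chart \<open>a $ 1 \<noteq> 0\<close> \<open>(M *v v) $ 1 = 0\<close>] by blast
  then show False using plane_chart_nonzero[OF chart \<open>v \<noteq> 0\<close>] by blast
qed

lemma triple_line_section_coeff_prod_eq_0:
  assumes "triple_line_section a" "a $ 1 = 0"
  shows "a $ 0 * a $ 2 * a $ 3 = 0"
proof (rule ccontr)
  assume a: "a $ 0 * a $ 2 * a $ 3 \<noteq> 0"
  obtain M c where chart: "plane_chart a M" and F: "\<And>u. Fcub (M *v u) = c * (u $ 0) ^ 3"
    using assms(1) unfolding triple_line_section_def by blast
  have "lf a (axis 1 1) = 0" using assms(2) by (simp add: lf_axis)
  then obtain e where e: "axis 1 1 = M *v e" using plane_chart_surj[OF chart] by blast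
  define x :: "complex^4" where "x = axis 0 (1 / a $ 0) + axis 2 (1 / a $ 2) + axis 3 (- 2 / a $ 3)"
  have "lf a x = 0" using a by (simp add: x_def lf_4 axis_def)
  then obtain u where u: "x = M *v u" using plane_chart_surj[OF chart] by blast
  define P where "P = x $ 0 * x $ 2 * x $ 3"
  have "P \<noteq> 0" using a by (simp add: P_def x_def axis_def)
  have line: "c * (u $ 0 + t * e $ 0) ^ 3 = P - t ^ 3" for t
  proof -
    have "x + t *s axis 1 1 = M *v (u + t *s e)"
      by (simp add: u e matrix_vector_right_distrib vector_scalar_commute)
    then have "Fcub (x + t *s axis 1 1) = c * (u $ 0 + t * e $ 0) ^ 3" by (simp add: F)
    moreover have "Fcub (x + t *s axis 1 1) = P - t ^ 3"
      by (simp add: Fcub_def P_def x_def axis_def)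
    ultimately show ?thesis by simp
  qed
  have "(c * (u $ 0) ^ 3 - P) + (3 * c * (u $ 0)\<^sup>2 * e $ 0) * t + (3 * c * u $ 0 * (e $ 0)\<^sup>2) * t\<^sup>2
      + (c * (e $ 0) ^ 3 + 1) * t ^ 3 = 0" for t
  proof -
    have "(c * (u $ 0) ^ 3 - P) + (3 * c * (u $ 0)\<^sup>2 * e $ 0) * t + (3 * c * u $ 0 * (e $ 0)\<^sup>2) * t\<^sup>2
      + (c * (e $ 0) ^ 3 + 1) * t ^ 3 = c * (u $ 0 + t * e $ 0) ^ 3 - (P - t ^ 3)"
      by algebra
    then show ?thesis by (simp add: line)
  qed
  from cubic_all_0_imp_coeffs_0[OF this]
  have "c * (u $ 0) ^ 3 = P" "c * u $ 0 * (e $ 0)\<^sup>2 = 0" "c * (e $ 0) ^ 3 = - 1"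
    by (simp_all add: eq_neg_iff_add_eq_0)
  then have "u $ 0 = 0" by auto
  then show False using \<open>c * (u $ 0) ^ 3 = P\<close> \<open>P \<noteq> 0\<close> by simp
qed

lemma unstable_sections_iff:
  assumes "a \<noteq> 0"
  shows "(cuspidal_section a \<and> (\<exists>x. x \<noteq> 0 \<and> x \<in> singD a \<and> x \<in> singS)) \<or> triple_line_section a
    \<longleftrightarrow> a $ 1 = 0 \<and> a $ 0 * a $ 2 * a $ 3 = 0"
proof
  assume "(cuspidal_section a \<and> (\<exists>x. x \<noteq> 0 \<and> x \<in> singD a \<and> x \<in> singS)) \<or> triple_line_section a"
  then show "a $ 1 = 0 \<and> a $ 0 * a $ 2 * a $ 3 = 0"
  proof
    assume "cuspidal_section a \<and> (\<exists>x. x \<noteq> 0 \<and> x \<in> singD a \<and> x \<in> singS)"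
    then obtain x where "cuspidal_section a" "x \<noteq> 0" "x \<in> singS" "lf a x = 0"
      by (auto simp: singD_def)
    then show ?thesis
      using plane_avoids_singS_iff[of a] cuspidal_section_coeff_prod_nonzero by blast
  next
    assume "triple_line_section a"
    then show ?thesis
      using triple_line_section_coeff_1_eq_0 triple_line_section_coeff_prod_eq_0 by blast
  qed
next
  assume a: "a $ 1 = 0 \<and> a $ 0 * a $ 2 * a $ 3 = 0"
  then obtain j where "j \<in> {0, 2, 3}" "a $ j = 0" by auto
  then have "axis j (1::complex) \<noteq> 0" "axis j 1 \<in> singD a" "axis j 1 \<in> singS"
    by (auto simp: axis_eq_0_iff axis_in_singD singS_iff_axis)
  then show "(cuspidal_section a \<and> (\<exists>x. x \<noteq> 0 \<and> x \<in> singD a \<and> x \<in> singS)) \<or> triple_line_section a"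
    using unstable_section_cases[OF assms] a by blast
qed

theorem corollary4p13:
  fixes a :: "complex^4"
  assumes "a \<noteq> 0"
  shows "(git_stable a \<longleftrightarrow> (\<forall>x. x \<noteq> 0 \<and> x \<in> singS \<longrightarrow> lf a x \<noteq> 0))
       \<and> (git_polystable a \<and> \<not> git_stable a \<longleftrightarrow> (\<exists>c. c \<noteq> 0 \<and> a = c *s Hstar))
       \<and> (git_unstable a \<longleftrightarrow>
            (cuspidal_section a \<and> (\<exists>x. x \<noteq> 0 \<and> x \<in> singD a \<and> x \<in> singS))
            \<or> triple_line_section a)"
proof -
  have Hstar: "c *s Hstar = axis 1 c" for c by (simp add: Hstar_def axis_def vec_eq_iff)
  have "(\<exists>c. c \<noteq> 0 \<and> a = c *s Hstar) \<longleftrightarrow> a = axis 1 (a $ 1)"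
  proof
    assume "a = axis 1 (a $ 1)"
    moreover from this have "a $ 1 \<noteq> 0" using assms by (metis axis_eq_0_iff)
    ultimately show "\<exists>c. c \<noteq> 0 \<and> a = c *s Hstar" by (auto simp: Hstar)
  qed (auto simp: Hstar)
  then show ?thesis
    using git_stable_iff[OF assms] plane_avoids_singS_iff[of a]
      git_polystable_not_stable_iff[OF assms] git_unstable_iff[OF assms]
      unstable_sections_iff[OF assms]
    by simp
qed

end
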